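(* Let $(A,m)$ be a strict $A_\infty$-algebra over a field $\mathbf{F}$, and let $m=\sum_{k\ge1}m_k\in\prod_{k}C^{k,2-k}(A,A)$. Then the class of $m$ in the Hochschild cohomology vanishes: $[m]=0\in \mathrm{HH}^2(A,A)$, i.e. there exists a cochain $a$ of total degree $1$ with $D(a)=[m,a]=m$.
   Context: A strict $A_\infty$-algebra $(A,m)$ over $\mathbf{F}$ is a $\mathbf{Z}$-graded vector space $A=\bigoplus_{k\in\mathbf{Z}}A^k$ with graded linear maps $m_n:A^{\otimes n}\to A$ ($n\ge1$) of degree $2-n$ satisfying, for every $n\ge1$, $\sum_{n=r+s+t}(-1)^{rs+t}m_{r+1+t}(\mathbf{I}^{\otimes r}\otimes m_s\otimes \mathbf{I}^{\otimes t})=0$ (with $r,t\ge0$, $s\ge1$), where tensor products of graded maps are evaluated with the Koszul sign rule $(f\otimes g)(x\otimes y)=(-1)^{|g||x|}f(x)\otimes g(y)$. Let $C^{n,k}(A,A)=\mathrm{Hom}^k(A^{\otimes n},A)=\prod_i\mathrm{Hom}((A^{\otimes n})^i,A^{i+k})$ (with $A^{\otimes 0}=\mathbf{F}$, so $C^{0,k}\cong A^k$); its total degree is $n+k$. For $f\in C^{n,k}$, $g\in C^{m,l}$ the Gerstenhaber bracket $[f,g]\in C^{n+m-1,k+l}$ is $[f,g]=\sum_{i=0}^{n-1}(-1)^{\delta_1}f(\mathbf{I}^{\otimes i}\otimes g\otimes \mathbf{I}^{\otimes n-i-1})-(-1)^{(n+k-1)(m+l-1)}\sum_{i=0}^{m-1}(-1)^{\delta_2}g(\mathbf{I}^{\otimes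 i}\otimes f\otimes\mathbf{I}^{\otimes m-i-1})$, where $\delta_1=(n-1)(m-1)+(n-1)l+i(m-1)$, $\delta_2=(m-1)(n-1)+(m-1)k+i(n-1)$, and an empty sum is $0$; it is extended bilinearly to products of such spaces. Since $m_k\in C^{k,2-k}$, $m$ has total degree $2$, $[m,m]=0$, and $D=[m,-]$ is a differential on $\prod C^{*,*}(A,A)$. The Hochschild cohomology is $\mathrm{HH}^*(A,A)=H^*(\prod_iC^{i,*-i}(A,A),D)$. *)

theory Defs
  imports Complex_Main
begin

text \<open>
A Z-graded vector space A = (direct sum over k of A^k) over a field 'f is given by a
scalar multiplication scale on an ambient type 'v together with a family V k of subspaces;
A is the EXTERNAL direct sum of the V k, so a homogeneous element is a pair
(degree k, vector in V k).  A linear map (A^{tensor n})^i -> A^{i+k} is the same thing as a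
family, indexed by degree tuples (i1,...,in) with i1+...+in = i, of multilinear maps
V i1 x ... x V in -> V (i+k).  Hence a cochain in C^{n,k}(A,A) is represented by a function
taking a list ds of n degrees and a list xs of n vectors (xs!j in V (ds!j)); only its values on
such homogeneous arguments matter.
\<close>

type_synonym 'v cochain = "int list \<Rightarrow> 'v list \<Rightarrow> 'v"

definition ksgn :: "int \<Rightarrow> 'f::field" where
  "ksgn e = (if even e then 1 else -1)"

definition homog_args :: "(int \<Rightarrow> 'v set) \<Rightarrow> int list \<Rightarrow> 'v list \<Rightarrow> bool" where
  "homog_args V ds xs \<longleftrightarrow> length xs = length ds \<and> (\<forall>j<length ds. xs ! j \<in> V (ds ! j))"

definition is_cochain ::
  "('f::field \<Rightarrow> 'v::ab_group_add \<Rightarrow> 'v) \<Rightarrow> (int \<Rightarrow> 'v set) \<Rightarrow> nat \<Rightarrow> int \<Rightarrow> 'v cochain \<Rightarrow> bool" where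
  "is_cochain scale V n k f \<longleftrightarrow>
     (\<forall>ds xs. length ds = n \<and> homog_args V ds xs \<longrightarrow> f ds xs \<in> V (sum_list ds + k)) \<and>
     (\<forall>ds xs j y a b. length ds = n \<and> homog_args V ds xs \<and> j < n \<and> y \<in> V (ds ! j) \<longrightarrow>
        f ds (xs[j := scale a (xs ! j) + scale b y]) = scale a (f ds xs) + scale b (f ds (xs[j := y])))"

definition cochain_eq :: "(int \<Rightarrow> 'v set) \<Rightarrow> nat \<Rightarrow> 'v cochain \<Rightarrow> 'v cochain \<Rightarrow> bool" where
  "cochain_eq V n f g \<longleftrightarrow> (\<forall>ds xs. length ds = n \<and> homog_args V ds xs \<longrightarrow> f ds xs = g ds xs)"

text \<open>f (I^{tensor i} tensor g tensor I^{tensor rest}) evaluated with the Koszul sign rule,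
  where g has arity m and degree l (as a graded map).\<close>
definition ins ::
  "('f::field \<Rightarrow> 'v::ab_group_add \<Rightarrow> 'v) \<Rightarrow> 'v cochain \<Rightarrow> nat \<Rightarrow> nat \<Rightarrow> int \<Rightarrow> 'v cochain \<Rightarrow> 'v cochain" where
  "ins scale f i m l g = (\<lambda>ds xs.
     scale (ksgn (l * sum_list (take i ds)))
       (f (take i ds @ [sum_list (take m (drop i ds)) + l] @ drop (i + m) ds)
          (take i xs @ [g (take m (drop i ds)) (take m (drop i xs))] @ drop (i + m) xs)))"

definition gbr ::
  "('f::field \<Rightarrow> 'v::ab_group_add \<Rightarrow> 'v) \<Rightarrow> nat \<Rightarrow> int \<Rightarrow> 'v cochain \<Rightarrow> nat \<Rightarrow> int \<Rightarrow> 'v cochain \<Rightarrow> 'v cochain" where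
  "gbr scale n k f m l g = (\<lambda>ds xs.
     (\<Sum>i<n. scale (ksgn ((int n - 1) * (int m - 1) + (int n - 1) * l + int i * (int m - 1)))
                (ins scale f i m l g ds xs))
   - scale (ksgn ((int n + k - 1) * (int m + l - 1)))
       (\<Sum>i<m. scale (ksgn ((int m - 1) * (int n - 1) + (int m - 1) * k + int i * (int n - 1)))
                (ins scale g i n k f ds xs)))"

definition is_tot_cochain ::
  "('f::field \<Rightarrow> 'v::ab_group_add \<Rightarrow> 'v) \<Rightarrow> (int \<Rightarrow> 'v set) \<Rightarrow> int \<Rightarrow> (nat \<Rightarrow> 'v cochain) \<Rightarrow> bool" where
  "is_tot_cochain scale V d F \<longleftrightarrow> (\<forall>n. is_cochain scale V n (d - int n) (F n))"

definition tot_eq :: "(int \<Rightarrow> 'v set) \<Rightarrow> (nat \<Rightarrow> 'v cochain) \<Rightarrow> (nat \<Rightarrow> 'v cochain) \<Rightarrow> bool" where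
  "tot_eq V F G \<longleftrightarrow> (\<forall>n. cochain_eq V n (F n) (G n))"

text \<open>Bilinear extension of the bracket to total cochains F (total degree d), G (total degree e):
  the arity-N component collects [F_n, G_m] with n + m - 1 = N.\<close>
definition tbr ::
  "('f::field \<Rightarrow> 'v::ab_group_add \<Rightarrow> 'v) \<Rightarrow> int \<Rightarrow> (nat \<Rightarrow> 'v cochain) \<Rightarrow> int \<Rightarrow> (nat \<Rightarrow> 'v cochain)
     \<Rightarrow> nat \<Rightarrow> 'v cochain" where
  "tbr scale d F e G N = (\<lambda>ds xs.
     \<Sum>n\<in>{0..N+1}. gbr scale n (d - int n) (F n) (N + 1 - n) (e - int (N + 1 - n)) (G (N + 1 - n)) ds xs)"

definition strict_ainf ::
  "('f::field \<Rightarrow> 'v::ab_group_add \<Rightarrow> 'v) \<Rightarrow> (int \<Rightarrow> 'v set) \<Rightarrow> (nat \<Rightarrow> 'v cochain) \<Rightarrow> bool" where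
  "strict_ainf scale V m \<longleftrightarrow>
     vector_space scale \<and> (\<forall>k. 0 \<in> V k \<and> (\<forall>x\<in>V k. \<forall>y\<in>V k. x + y \<in> V k) \<and> (\<forall>c. \<forall>x\<in>V k. scale c x \<in> V k)) \<and>
     (\<forall>n\<ge>1. is_cochain scale V n (2 - int n) (m n)) \<and>
     (\<forall>n\<ge>1. \<forall>ds xs. length ds = n \<and> homog_args V ds xs \<longrightarrow>
        (\<Sum>s\<in>{1..n}. \<Sum>r\<in>{0..n - s}.
           scale (ksgn (int r * int s + int (n - r - s)))
             (ins scale (m (r + 1 + (n - r - s))) r s (2 - int s) (m s) ds xs)) = 0)"

definition ainf_tot :: "(nat \<Rightarrow> 'v::zero cochain) \<Rightarrow> nat \<Rightarrow> 'v cochain" where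
  "ainf_tot m = (\<lambda>n. if n = 0 then (\<lambda>_ _. 0) else m n)"

end

theory Submission
  imports Defs
begin

text \<open>
  The class of \<open>m\<close> is killed by a weighted Euler derivation.  Let \<open>E\<close> be the arity-one
  cochain \<open>x \<mapsto> (1 - |x|) x\<close>.  For a cochain \<open>f \<in> C^{n,k}\<close> the insertions of \<open>E\<close> into \<open>f\<close>
  contribute \<open>(n - \<Sigma> |x\<^sub>i|) f\<close>, and the insertion of \<open>f\<close> into \<open>E\<close> contributes
  \<open>(1 - \<Sigma> |x\<^sub>i| - k) f\<close>, all signs being \<open>+1\<close>; hence \<open>[f, E] = (n + k - 1) f\<close>.  Every
  \<open>m\<^sub>n\<close> has total degree \<open>2\<close>, so \<open>[m, E] = m\<close>.
\<close>

lemma homog_args_iff_list_all2: "homog_args V ds xs \<longleftrightarrow> list_all2 (\<lambda>d x. x \<in> V d) ds xs"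
  unfolding homog_args_def list_all2_conv_all_nth by auto

lemma homog_args_replace_block:
  assumes "homog_args V ds xs" "x \<in> V d"
  shows "homog_args V (take i ds @ [d] @ drop j ds) (take i xs @ [x] @ drop j xs)"
  using assms unfolding homog_args_iff_list_all2
  by (intro list_all2_appendI) (auto simp: list_all2_takeI list_all2_dropI)

lemma is_cochain_zero:
  assumes "vector_space scale" "\<And>d. 0 \<in> V d"
  shows "is_cochain scale V n k (\<lambda>_ _. 0)"
proof -
  interpret vector_space scale by (rule assms(1))
  show ?thesis using assms(2) unfolding is_cochain_def by simp
qed

lemma is_cochain_scale_slot:
  assumes "vector_space scale" "is_cochain scale V n k f"
    and "homog_args V ds xs" "length ds = n" "j < n"
  shows "f ds (xs[j := scale a (xs ! j)]) = scale a (f ds xs)"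
proof -
  interpret vector_space scale by (rule assms(1))
  have "xs ! j \<in> V (ds ! j)" using assms(3-5) unfolding homog_args_def by auto
  then have "f ds (xs[j := scale a (xs ! j) + scale 0 (xs ! j)])
      = scale a (f ds xs) + scale 0 (f ds (xs[j := xs ! j]))"
    using assms(2-5) unfolding is_cochain_def by blast
  then show ?thesis by simp
qed

lemma is_cochain_zero_slot:
  assumes "vector_space scale" "is_cochain scale V n k f"
    and "homog_args V ds xs" "length ds = n" "j < n" "xs ! j = 0"
  shows "f ds xs = 0"
proof -
  interpret vector_space scale by (rule assms(1))
  have "f ds xs = f ds (xs[j := scale 0 (xs ! j)])"
    using assms(6) by (metis scale_zero_left list_update_id)
  also have "\<dots> = 0" using is_cochain_scale_slot[OF assms(1-5), of 0] by simp
  finally show ?thesis .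
qed

lemma gbr_zero_right:
  assumes "vector_space scale" "\<And>d. 0 \<in> V d" "is_cochain scale V n k f"
    and "homog_args V ds xs" "length ds + 1 = n + m"
  shows "gbr scale n k f m l (\<lambda>_ _. 0) ds xs = 0"
proof -
  interpret vector_space scale by (rule assms(1))
  have "length xs = length ds" using assms(4) unfolding homog_args_def by simp
  have "ins scale f i m l (\<lambda>_ _. 0) ds xs = 0" if "i < n" for i
  proof -
    let ?d = "sum_list (take m (drop i ds)) + l"
    have "f (take i ds @ [?d] @ drop (i + m) ds) (take i xs @ [0] @ drop (i + m) xs) = 0"
      by (rule is_cochain_zero_slot[OF assms(1,3) homog_args_replace_block[OF assms(4,2)], of i])
        (use that assms(5) \<open>length xs = length ds\<close> in \<open>auto simp: nth_append\<close>)
    then show ?thesis unfolding ins_def by simp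
  qed
  then show ?thesis unfolding gbr_def by (simp add: ins_def[of scale "\<lambda>_ _. 0"])
qed

definition euler_cochain :: "('f::field \<Rightarrow> 'v \<Rightarrow> 'v) \<Rightarrow> 'v cochain" where
  "euler_cochain scale = (\<lambda>ds xs. scale (1 - of_int (hd ds)) (hd xs))"

definition euler_tot :: "('f::field \<Rightarrow> 'v::zero \<Rightarrow> 'v) \<Rightarrow> nat \<Rightarrow> 'v cochain" where
  "euler_tot scale = (\<lambda>n. if n = 1 then euler_cochain scale else (\<lambda>_ _. 0))"

lemma is_cochain_euler:
  assumes "vector_space scale" "\<And>d c x. x \<in> V d \<Longrightarrow> scale c x \<in> V d"
  shows "is_cochain scale V 1 0 (euler_cochain scale)"
proof -
  interpret vector_space scale by (rule assms(1))
  show ?thesis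
    unfolding is_cochain_def homog_args_def euler_cochain_def
  proof (intro conjI allI impI, goal_cases)
    case (1 ds xs)
    then show ?case using assms(2) by (cases ds; cases xs) auto
  next
    case (2 ds xs j y c b)
    then show ?case by (cases ds; cases xs) (auto simp: scale_right_distrib mult.commute)
  qed
qed

lemma is_tot_cochain_euler_tot:
  assumes "vector_space scale" "\<And>d. 0 \<in> V d" "\<And>d c x. x \<in> V d \<Longrightarrow> scale c x \<in> V d"
  shows "is_tot_cochain scale V 1 (euler_tot scale)"
  unfolding is_tot_cochain_def euler_tot_def
  using is_cochain_euler[OF assms(1,3)] is_cochain_zero[OF assms(1,2)] by simp

lemma ins_euler_cochain_right:
  assumes "vector_space scale" "is_cochain scale V n k f"
    and "homog_args V ds xs" "length ds = n" "i < n"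
  shows "ins scale f i 1 0 (euler_cochain scale) ds xs = scale (1 - of_int (ds ! i)) (f ds xs)"
proof -
  interpret vector_space scale by (rule assms(1))
  have "length xs = n" using assms(3,4) unfolding homog_args_def by simp
  then have "drop i ds = ds ! i # drop (Suc i) ds" "drop i xs = xs ! i # drop (Suc i) xs"
    using assms(4,5) by (simp_all add: Cons_nth_drop_Suc)
  then have "ins scale f i 1 0 (euler_cochain scale) ds xs
      = f ds (xs[i := scale (1 - of_int (ds ! i)) (xs ! i)])"
    unfolding ins_def euler_cochain_def using assms(4,5) \<open>length xs = n\<close>
    by (simp add: upd_conv_take_nth_drop ksgn_def flip: id_take_nth_drop)
  also have "\<dots> = scale (1 - of_int (ds ! i)) (f ds xs)"
    by (rule is_cochain_scale_slot[OF assms])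
  finally show ?thesis .
qed

lemma gbr_euler_cochain:
  fixes scale :: "'f::field \<Rightarrow> 'v::ab_group_add \<Rightarrow> 'v"
  assumes "vector_space scale" "is_cochain scale V n k f"
    and "homog_args V ds xs" "length ds = n"
  shows "gbr scale n k f 1 0 (euler_cochain scale) ds xs = scale (of_int (int n + k - 1)) (f ds xs)"
proof -
  interpret vector_space scale by (rule assms(1))
  have "length xs = n" using assms(3,4) unfolding homog_args_def by simp
  have inner: "(\<Sum>i<n. scale (ksgn ((int n - 1) * (int 1 - 1) + (int n - 1) * 0 + int i * (int 1 - 1)))
        (ins scale f i 1 0 (euler_cochain scale) ds xs))
      = scale (\<Sum>i<n. 1 - of_int (ds ! i)) (f ds xs)"
    unfolding scale_sum_left
  proof (rule sum.cong)
    fix i assume "i \<in> {..<n}"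
    then show "scale (ksgn ((int n - 1) * (int 1 - 1) + (int n - 1) * 0 + int i * (int 1 - 1)))
        (ins scale f i 1 0 (euler_cochain scale) ds xs) = scale (1 - of_int (ds ! i)) (f ds xs)"
      using ins_euler_cochain_right[OF assms] by (simp add: ksgn_def)
  qed simp
  have weights: "(\<Sum>i<n. 1 - of_int (ds ! i) :: 'f) = of_nat n - of_int (sum_list ds)"
    using assms(4) by (simp add: sum_subtractf sum_list_sum_nth atLeast0LessThan)
  have outer: "ins scale (euler_cochain scale) 0 n k f ds xs
      = scale (1 - (of_int (sum_list ds) + of_int k)) (f ds xs)"
    unfolding ins_def euler_cochain_def using assms(4) \<open>length xs = n\<close> by (simp add: ksgn_def)
  have "gbr scale n k f 1 0 (euler_cochain scale) ds xs
      = scale (of_nat n - of_int (sum_list ds)) (f ds xs)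
        - scale (1 - (of_int (sum_list ds) + of_int k)) (f ds xs)"
    unfolding gbr_def inner weights by (simp add: outer ksgn_def)
  also have "\<dots> = scale (of_int (int n + k - 1)) (f ds xs)"
    by (simp flip: scale_left_diff_distrib)
  finally show ?thesis .
qed

lemma is_tot_cochain_ainf_tot:
  assumes "strict_ainf scale V m"
  shows "is_tot_cochain scale V 2 (ainf_tot m)"
  using assms is_cochain_zero[of scale V]
  unfolding strict_ainf_def is_tot_cochain_def ainf_tot_def by auto

lemma tbr_euler_tot:
  assumes "vector_space scale" "\<And>d. 0 \<in> V d" "is_tot_cochain scale V d F"
    and "homog_args V ds xs" "length ds = N"
  shows "tbr scale d F 1 (euler_tot scale) N ds xs = scale (of_int (d - 1)) (F N ds xs)"
proof -
  let ?term = "\<lambda>n. gbr scale n (d - int n) (F n) (N + 1 - n) (1 - int (N + 1 - n))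
    (euler_tot scale (N + 1 - n)) ds xs"
  have F: "\<And>n. is_cochain scale V n (d - int n) (F n)"
    using assms(3) unfolding is_tot_cochain_def by blast
  have "?term n = 0" if "n \<in> {0..N+1} - {N}" for n
    using that gbr_zero_right[OF assms(1,2) F assms(4)] assms(5) by (auto simp: euler_tot_def)
  then have "tbr scale d F 1 (euler_tot scale) N ds xs = ?term N"
    unfolding tbr_def by (subst sum.remove[of _ N]) auto
  also have "\<dots> = scale (of_int (d - 1)) (F N ds xs)"
    using gbr_euler_cochain[OF assms(1) F assms(4,5)] by (simp add: euler_tot_def)
  finally show ?thesis .
qed

theorem theorem1p9:
  fixes scale :: "'f::field \<Rightarrow> 'v::ab_group_add \<Rightarrow> 'v"
    and V :: "int \<Rightarrow> 'v set"
    and m :: "nat \<Rightarrow> 'v cochain"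
  assumes "strict_ainf scale V m"
  shows "\<exists>a. is_tot_cochain scale V 1 a \<and>
             tot_eq V (tbr scale 2 (ainf_tot m) 1 a) (ainf_tot m)"
proof (intro exI conjI)
  have vs: "vector_space scale" and zero: "\<And>d. 0 \<in> V d"
    and closed: "\<And>d c x. x \<in> V d \<Longrightarrow> scale c x \<in> V d"
    using assms unfolding strict_ainf_def by auto
  interpret vector_space scale by (rule vs)
  show "is_tot_cochain scale V 1 (euler_tot scale)"
    using vs zero closed by (rule is_tot_cochain_euler_tot)
  show "tot_eq V (tbr scale 2 (ainf_tot m) 1 (euler_tot scale)) (ainf_tot m)"
    unfolding tot_eq_def cochain_eq_def
    using tbr_euler_tot[OF vs zero is_tot_cochain_ainf_tot[OF assms]] by simp
qed

end
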